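(* Let $a < b$ be real, $\mathcal{P} = [a,b]$, and let $A_1, A_2 \in \mathbb{R}^{n\times n}$, $B \in \mathbb{R}^{n \times n_i}$, $C \in \mathbb{R}^{n_o \times n}$ define the full-order output $y(\mathsf{p}) = C(A_1 + \mathsf{p}A_2)^{-1}B$, and suppose $y(\mathsf{p}) = \Phi_0 + \sum_{i=1}^{n} \frac{\Phi_i}{\mathsf{p} - \nu_i}$ with constant matrices $\Phi_0, \Phi_i \in \mathbb{R}^{n_o\times n_i}$ and pairwise distinct poles $\nu_i \in \mathbb{R} \setminus [a,b]$. For real matrices $\hat{A}_1, \hat{A}_2 \in \mathbb{R}^{r\times r}$, $\hat{B} \in \mathbb{R}^{r \times n_i}$, $\hat{C} \in \mathbb{R}^{n_o \times r}$ define the reduced output $\hat{y}(\mathsf{p}) = \hat{C}(\hat{A}_1 + \mathsf{p}\hat{A}_2)^{-1}\hat{B}$, and suppose $\hat{y}(\mathsf{p}) = \sum_{j=1}^{r} \frac{c_j b_j^{T}}{\mathsf{p} - \lambda_j}$ with $c_j \in \mathbb{R}^{n_o}$, $b_j \in \mathbb{R}^{n_i}$ and pairwise distinct $\lambda_j \in \mathbb{R} \setminus [a,b]$. For $\sigma \in \mathbb{R}\setminus\{a,b\}$ define $f_\sigma\colon \mathbb{R}\setminus\{a,b\} \to \mathbb{R}$ by \[ f_\sigma(\mathsf{p}) = \begin{cases} \left( \ln\left|\frac{\mathsf{p} - b}{\mathsf{p} - a}\right| - \ln\left|\frac{\sigma - b}{\sigma - a}\right| \right) \frac{1}{\mathsf{p}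 - \sigma}, & \mathsf{p} \neq \sigma,\\[1ex] \frac{b - a}{(\sigma - a)(\sigma - b)}, & \mathsf{p} = \sigma, \end{cases} \] and define $Y, \hat{Y}$ on $\mathbb{R}\setminus\{a,b\}$ by \[ Y(\mathsf{p}) = \ln\left|\frac{\mathsf{p} - b}{\mathsf{p} - a}\right| \Phi_0 + \sum_{i=1}^{n} f_{\nu_i}(\mathsf{p}) \Phi_i, \qquad \hat{Y}(\mathsf{p}) = \sum_{j=1}^{r} f_{\lambda_j}(\mathsf{p}) c_j b_j^{T}. \] If $\hat{y}$ is an $\mathcal{L}_2$-optimal structured approximation of $y$, then for $k = 1,\dots,r$: \[ Y(\lambda_k) b_k = \hat{Y}(\lambda_k) b_k, \qquad c_k^{T} Y(\lambda_k) = c_k^{T} \hat{Y}(\lambda_k), \qquad c_k^{T} Y'(\lambda_k) b_k = c_k^{T} \hat{Y}'(\lambda_k) b_k. \]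
   Context: "$\hat{y}$ is an $\mathcal{L}_2$-optimal structured approximation of $y$" means that the real matrices $(\hat{A}_1, \hat{A}_2, \hat{B}, \hat{C})$ minimize $\int_a^b \|y(\mathsf{p}) - \hat{y}(\mathsf{p})\|_F^2 \, d\mathsf{p}$ over all reduced models of the form $\hat{C}(\hat{A}_1 + \mathsf{p}\hat{A}_2)^{-1}\hat{B}$ of fixed order $r$. The pole-residue form of $\hat{y}$ arises when $\hat{A}_2$ is invertible and $\hat{A}_2^{-1}\hat{A}_1$ has $r$ distinct real eigenvalues (the poles being the $\lambda_j$). $\|\cdot\|_F$ is the Frobenius norm; $Y'$ and $\hat{Y}'$ denote derivatives with respect to $\mathsf{p}$ (both functions are continuously differentiable). *)

theory Defs
  imports "HOL-Analysis.Analysis"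
begin

definition pout :: "real^'n^'n \<Rightarrow> real^'n^'n \<Rightarrow> real^'ni^'n \<Rightarrow> real^'n^'no
                     \<Rightarrow> real \<Rightarrow> real^'ni^'no" where
  "pout A1 A2 B C p = C ** matrix_inv (A1 + p *\<^sub>R A2) ** B"

definition frob_norm :: "real^'m^'k \<Rightarrow> real" where
  "frob_norm M = sqrt (\<Sum>i\<in>UNIV. \<Sum>j\<in>UNIV. (M $ i $ j)^2)"

definition L2_err :: "real \<Rightarrow> real \<Rightarrow> (real \<Rightarrow> real^'m^'k) \<Rightarrow> (real \<Rightarrow> real^'m^'k) \<Rightarrow> real" where
  "L2_err a b y yh = integral {a..b} (\<lambda>p. (frob_norm (y p - yh p))^2)"

definition L2_optimal ::
  "real \<Rightarrow> real \<Rightarrow> (real \<Rightarrow> real^'ni^'no)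
   \<Rightarrow> real^'r^'r \<Rightarrow> real^'r^'r \<Rightarrow> real^'ni^'r \<Rightarrow> real^'r^'no \<Rightarrow> bool" where
  "L2_optimal a b y Ah1 Ah2 Bh Ch \<longleftrightarrow>
     (\<forall>p\<in>{a..b}. invertible (Ah1 + p *\<^sub>R Ah2)) \<and>
     (\<forall>(A1'::real^'r^'r) (A2'::real^'r^'r) B' C'.
        (\<forall>p\<in>{a..b}. invertible (A1' + p *\<^sub>R A2')) \<longrightarrow>
        L2_err a b y (pout Ah1 Ah2 Bh Ch) \<le> L2_err a b y (pout A1' A2' B' C'))"

definition outer :: "real^'k \<Rightarrow> real^'m \<Rightarrow> real^'m^'k" where
  "outer c v = (\<chi> i j. c $ i * v $ j)"

definition fsig :: "real \<Rightarrow> real \<Rightarrow> real \<Rightarrow> real \<Rightarrow> real" where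
  "fsig a b \<sigma> p =
     (if p \<noteq> \<sigma> then (ln \<bar>(p - b) / (p - a)\<bar> - ln \<bar>(\<sigma> - b) / (\<sigma> - a)\<bar>) * (1 / (p - \<sigma>))
      else (b - a) / ((\<sigma> - a) * (\<sigma> - b)))"

end

theory Submission
  imports Defs
begin

(* Y and Yh are the transforms p \<mapsto> \<integral>_a^b g(q) / (q - p) dq of g = y and of the pole-residue
   sum g = yh, because \<integral>_a^b 1/(q - p) dq = ln |(p - b)/(p - a)| and \<integral>_a^b 1/((q - p)(q - \<sigma>)) dq = f_\<sigma>(p).
   Every pole-residue sum with poles outside [a,b] is the output of a diagonal reduced model,
   so yh minimises the L2 error among all such sums. Perturbing c_k, b_k and \<lambda>_k and
   differentiating the error at the minimum shows that e = y - yh is orthogonal to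
   (q - \<lambda>_k)^-1 u b_k^T, to (q - \<lambda>_k)^-1 c_k v^T and to (q - \<lambda>_k)^-2 c_k b_k^T for all u, v.
   As Y - Yh is the transform of e and (Y - Yh)'(\<lambda>_k) = \<integral>_a^b e(q) / (q - \<lambda>_k)^2 dq, these
   are the three interpolation conditions. *)

lemma frob_norm_eq_norm: "frob_norm (M::real^'m^'k) = norm M"
  unfolding frob_norm_def norm_vec_def L2_set_def
  by (simp add: real_sqrt_pow2 sum_nonneg power2_eq_square)

lemma matrix_inv_unique:
  fixes A X :: "real^'n^'n"
  assumes "A ** X = mat 1" "X ** A = mat 1"
  shows "matrix_inv A = X"
proof -
  have "A ** matrix_inv A = mat 1 \<and> matrix_inv A ** A = mat 1"
    unfolding matrix_inv_def by (rule someI[of _ X]) (use assms in blast)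
  then have "matrix_inv A = matrix_inv A ** (A ** X)" "matrix_inv A ** A = mat 1"
    using assms by simp_all
  then show ?thesis by (simp add: matrix_mul_assoc)
qed

definition diag_mat :: "('n \<Rightarrow> real) \<Rightarrow> real^'n^'n" where
  "diag_mat d = (\<chi> i j. if i = j then d i else 0)"

lemma diag_mat_mult: "diag_mat d ** diag_mat d' = diag_mat (\<lambda>i. d i * d' i)"
  by (simp add: diag_mat_def matrix_matrix_mult_def vec_eq_iff if_distrib[of "\<lambda>x. x * _"]
      cong: if_cong)

lemma diag_mat_1: "diag_mat (\<lambda>_. 1) = mat 1"
  by (simp add: diag_mat_def mat_def)

lemma invertible_diag_mat:
  assumes "\<And>i. d i \<noteq> 0"
  shows "invertible (diag_mat d)" and "matrix_inv (diag_mat d) = diag_mat (\<lambda>i. 1 / d i)"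
proof -
  have "diag_mat d ** diag_mat (\<lambda>i. 1 / d i) = mat 1" "diag_mat (\<lambda>i. 1 / d i) ** diag_mat d = mat 1"
    using assms by (simp_all add: diag_mat_mult diag_mat_1[symmetric])
  then show "invertible (diag_mat d)" "matrix_inv (diag_mat d) = diag_mat (\<lambda>i. 1 / d i)"
    unfolding invertible_def by (auto intro: matrix_inv_unique)
qed

lemma transpose_mult_diag_mat_mult:
  "transpose (\<chi> j. c j) ** diag_mat d ** (\<chi> j. v j) = (\<Sum>j\<in>UNIV. d j *\<^sub>R outer (c j) (v j))"
  by (simp add: diag_mat_def outer_def transpose_def matrix_matrix_mult_def vec_eq_iff
      if_distrib[of "\<lambda>x. _ * x"] if_distrib[of "\<lambda>x. x * _"] mult_ac cong: if_cong)

lemma outer_diff_left: "outer (u - u') v = outer u v - outer u' v"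
  by (simp add: outer_def vec_eq_iff algebra_simps)

lemma outer_diff_right: "outer u (v - v') = outer u v - outer u v'"
  by (simp add: outer_def vec_eq_iff algebra_simps)

lemma outer_scaleR_left: "outer (x *\<^sub>R u) v = x *\<^sub>R outer u v"
  by (simp add: outer_def vec_eq_iff)

lemma outer_scaleR_right: "outer u (x *\<^sub>R v) = x *\<^sub>R outer u v"
  by (simp add: outer_def vec_eq_iff algebra_simps)

lemma inner_outer_eq_inner_mult_vec: "(M::real^'m^'k) \<bullet> outer u v = u \<bullet> (M *v v)"
  by (simp add: inner_vec_def outer_def matrix_vector_mult_def sum_distrib_left mult_ac)

lemma inner_outer_eq_vec_mult_inner: "(M::real^'m^'k) \<bullet> outer u v = (u v* M) \<bullet> v"
  by (simp add: inner_outer_eq_inner_mult_vec dot_lmul_matrix)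

definition pole_residue_sum ::
  "('r::finite \<Rightarrow> real^'no) \<Rightarrow> ('r \<Rightarrow> real^'ni) \<Rightarrow> ('r \<Rightarrow> real) \<Rightarrow> real \<Rightarrow> real^'ni^'no" where
  "pole_residue_sum c bv lam q = (\<Sum>j\<in>UNIV. (1 / (q - lam j)) *\<^sub>R outer (c j) (bv j))"

lemma sum_UNIV_fun_upd:
  fixes h :: "'a \<Rightarrow> 'r::finite \<Rightarrow> 'b::ab_group_add"
  shows "(\<Sum>j\<in>UNIV. h ((g(k := x)) j) j) - (\<Sum>j\<in>UNIV. h (g j) j) = h x k - h (g k) k"
proof -
  have "(\<Sum>j\<in>UNIV. h ((g(k := x)) j) j - h (g j) j) = (\<Sum>j\<in>UNIV. if j = k then h x k - h (g k) k else 0)"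
    by (rule sum.cong) auto
  then show ?thesis by (simp add: sum_subtractf)
qed

lemma pole_residue_sum_update_c:
  "pole_residue_sum (c(k := c k + x *\<^sub>R u)) bv lam q - pole_residue_sum c bv lam q
     = x *\<^sub>R ((1 / (q - lam k)) *\<^sub>R outer u (bv k))"
  unfolding pole_residue_sum_def
  using sum_UNIV_fun_upd[of "\<lambda>cj j. (1 / (q - lam j)) *\<^sub>R outer cj (bv j)" c k "c k + x *\<^sub>R u"]
  by (simp add: outer_diff_left[symmetric] outer_scaleR_left scaleR_diff_right[symmetric])

lemma pole_residue_sum_update_bv:
  "pole_residue_sum c (bv(k := bv k + x *\<^sub>R v)) lam q - pole_residue_sum c bv lam q
     = x *\<^sub>R ((1 / (q - lam k)) *\<^sub>R outer (c k) v)"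
  unfolding pole_residue_sum_def
  using sum_UNIV_fun_upd[of "\<lambda>bj j. (1 / (q - lam j)) *\<^sub>R outer (c j) bj" bv k "bv k + x *\<^sub>R v"]
  by (simp add: outer_diff_right[symmetric] outer_scaleR_right scaleR_diff_right[symmetric])

lemma pole_residue_sum_update_lam:
  "pole_residue_sum c bv (lam(k := s)) q - pole_residue_sum c bv lam q
     = (1 / (q - s) - 1 / (q - lam k)) *\<^sub>R outer (c k) (bv k)"
  unfolding pole_residue_sum_def
  using sum_UNIV_fun_upd[of "\<lambda>lj j. (1 / (q - lj)) *\<^sub>R outer (c j) (bv j)" lam k s]
  by (simp add: scaleR_diff_left)

lemma pout_diagonal_realization:
  fixes lam :: "'r::finite \<Rightarrow> real"
  assumes "\<And>j. lam j \<noteq> p"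
  shows "invertible (diag_mat (\<lambda>j. - lam j) + p *\<^sub>R mat 1)"
    and "pout (diag_mat (\<lambda>j. - lam j)) (mat 1) (\<chi> j. bv j) (transpose (\<chi> j. c j)) p
           = pole_residue_sum c bv lam p"
proof -
  have shifted_diag: "diag_mat (\<lambda>j. - lam j) + p *\<^sub>R mat 1 = diag_mat (\<lambda>j. p - lam j)"
    by (simp add: diag_mat_def mat_def vec_eq_iff)
  have "\<And>j. p - lam j \<noteq> 0" using assms by (metis eq_iff_diff_eq_0)
  note inv = invertible_diag_mat[OF this]
  show "invertible (diag_mat (\<lambda>j. - lam j) + p *\<^sub>R mat 1)"
    unfolding shifted_diag by (rule inv(1))
  show "pout (diag_mat (\<lambda>j. - lam j)) (mat 1) (\<chi> j. bv j) (transpose (\<chi> j. c j)) p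
          = pole_residue_sum c bv lam p"
    unfolding pout_def shifted_diag inv(2) transpose_mult_diag_mat_mult pole_residue_sum_def ..
qed

lemma L2_err_cong: "(\<And>q. q \<in> {a..b} \<Longrightarrow> yh q = yh' q) \<Longrightarrow> L2_err a b y yh = L2_err a b y yh'"
  unfolding L2_err_def by (rule integral_cong) simp

lemma has_integral_inverse_shifted:
  fixes a b p :: real
  assumes "a \<le> b" and "p \<notin> {a..b}"
  shows "((\<lambda>q. 1 / (q - p)) has_integral ln \<bar>(p - b) / (p - a)\<bar>) {a..b}"
proof -
  have pos: "(p - q) / (p - a) > 0" if "q \<in> {a..b}" for q
    using assms that by (auto simp: zero_less_divide_iff)
  have "((\<lambda>q. 1 / (q - p)) has_integral ln ((p - b) / (p - a)) - ln ((p - a) / (p - a))) {a..b}"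
  proof (rule fundamental_theorem_of_calculus)
    fix x assume x: "x \<in> {a..b}"
    have "p - x \<noteq> 0" "p - a \<noteq> 0"
      using assms x by auto
    then have "((\<lambda>q. ln ((p - q) / (p - a))) has_real_derivative 1 / (x - p)) (at x within {a..b})"
      using pos[OF x]
      by (auto intro!: derivative_eq_intros) (simp add: divide_simps, simp add: algebra_simps)
    then show "((\<lambda>q. ln ((p - q) / (p - a))) has_vector_derivative 1 / (x - p)) (at x within {a..b})"
      by (simp add: has_real_derivative_iff_has_vector_derivative)
  qed (use assms in auto)
  moreover have "p - a \<noteq> 0"
    using assms by auto
  ultimately show ?thesis
    using abs_of_pos[OF pos[of b]] assms by simp
qed

lemma has_integral_inverse_shifted_squared:
  fixes a b p :: real
  assumes "a \<le> b" and "p \<notin> {a..b}"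
  shows "((\<lambda>q. 1 / (q - p) * (1 / (q - p))) has_integral (b - a) / ((p - a) * (p - b))) {a..b}"
proof -
  have "((\<lambda>q. 1 / (q - p) * (1 / (q - p))) has_integral (- 1 / (b - p)) - (- 1 / (a - p))) {a..b}"
  proof (rule fundamental_theorem_of_calculus)
    fix x assume "x \<in> {a..b}"
    then have "x - p \<noteq> 0" using assms by auto
    then show "((\<lambda>q. - 1 / (q - p)) has_vector_derivative 1 / (x - p) * (1 / (x - p))) (at x within {a..b})"
      unfolding has_real_derivative_iff_has_vector_derivative[symmetric]
      by (auto intro!: derivative_eq_intros simp: power2_eq_square)
  qed (use assms in auto)
  moreover have "p - a \<noteq> 0" "p - b \<noteq> 0"
    using assms by auto
  then have "(- 1 / (b - p)) - (- 1 / (a - p)) = (b - a) / ((p - a) * (p - b))"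
    by (simp add: field_simps)
  ultimately show ?thesis by simp
qed

lemma has_integral_fsig:
  fixes a b p \<sigma> :: real
  assumes "a \<le> b" and p: "p \<notin> {a..b}" and \<sigma>: "\<sigma> \<notin> {a..b}"
  shows "((\<lambda>q. 1 / (q - p) * (1 / (q - \<sigma>))) has_integral fsig a b \<sigma> p) {a..b}"
proof (cases "p = \<sigma>")
  case True
  then show ?thesis using has_integral_inverse_shifted_squared[OF assms(1) p] by (simp add: fsig_def)
next
  case False
  have partial_fraction: "1 / (q - p) * (1 / (q - \<sigma>)) = (1 / (q - p) - 1 / (q - \<sigma>)) / (p - \<sigma>)"
    if "q \<in> {a..b}" for q
  proof -
    have "q - p \<noteq> 0" "q - \<sigma> \<noteq> 0" "p - \<sigma> \<noteq> 0"
      using False p \<sigma> that by auto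
    then show ?thesis by (simp add: divide_simps)
  qed
  have "((\<lambda>q. (1 / (q - p) - 1 / (q - \<sigma>)) / (p - \<sigma>)) has_integral
          (ln \<bar>(p - b) / (p - a)\<bar> - ln \<bar>(\<sigma> - b) / (\<sigma> - a)\<bar>) / (p - \<sigma>)) {a..b}"
    by (intro has_integral_divide has_integral_diff has_integral_inverse_shifted assms)
  then have "((\<lambda>q. 1 / (q - p) * (1 / (q - \<sigma>))) has_integral
          (ln \<bar>(p - b) / (p - a)\<bar> - ln \<bar>(\<sigma> - b) / (\<sigma> - a)\<bar>) / (p - \<sigma>)) {a..b}"
    by (rule has_integral_eq[rotated]) (metis partial_fraction)
  then show ?thesis
    using False by (simp add: fsig_def)
qed

definition cauchy_transform :: "real \<Rightarrow> real \<Rightarrow> (real \<Rightarrow> 'v::real_normed_vector) \<Rightarrow> real \<Rightarrow> 'v" where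
  "cauchy_transform a b g p = integral {a..b} (\<lambda>q. (1 / (q - p)) *\<^sub>R g q)"

lemma continuous_on_partial_fractions:
  fixes P0 :: "'v::real_normed_vector" and P :: "'i::finite \<Rightarrow> 'v"
  assumes "\<And>i. nu i \<notin> S"
  shows "continuous_on S (\<lambda>q. P0 + (\<Sum>i\<in>UNIV. (1 / (q - nu i)) *\<^sub>R P i))"
proof -
  have "\<forall>q\<in>S. q - nu i \<noteq> 0" for i using assms by auto
  then show ?thesis by (intro continuous_intros) auto
qed

lemma continuous_on_pole_residue_sum:
  assumes "\<And>j. lam j \<notin> S"
  shows "continuous_on S (pole_residue_sum c bv lam)"
  using continuous_on_partial_fractions[OF assms, of 0] by (simp add: pole_residue_sum_def[abs_def])

lemma cauchy_transform_partial_fractions: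
  fixes P0 :: "'v::real_normed_vector" and P :: "'i::finite \<Rightarrow> 'v"
  assumes "a \<le> b" and p: "p \<notin> {a..b}" and nu: "\<And>i. nu i \<notin> {a..b}"
    and g: "\<And>q. q \<in> {a..b} \<Longrightarrow> g q = P0 + (\<Sum>i\<in>UNIV. (1 / (q - nu i)) *\<^sub>R P i)"
  shows "cauchy_transform a b g p = ln \<bar>(p - b) / (p - a)\<bar> *\<^sub>R P0 + (\<Sum>i\<in>UNIV. fsig a b (nu i) p *\<^sub>R P i)"
proof -
  have "((\<lambda>q. (1 / (q - p)) *\<^sub>R P0 + (\<Sum>i\<in>UNIV. (1 / (q - p) * (1 / (q - nu i))) *\<^sub>R P i)) has_integral
          ln \<bar>(p - b) / (p - a)\<bar> *\<^sub>R P0 + (\<Sum>i\<in>UNIV. fsig a b (nu i) p *\<^sub>R P i)) {a..b}"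
    by (intro has_integral_add has_integral_sum has_integral_scaleR_left has_integral_inverse_shifted
        has_integral_fsig assms) auto
  then have "((\<lambda>q. (1 / (q - p)) *\<^sub>R g q) has_integral
          ln \<bar>(p - b) / (p - a)\<bar> *\<^sub>R P0 + (\<Sum>i\<in>UNIV. fsig a b (nu i) p *\<^sub>R P i)) {a..b}"
    by (rule has_integral_eq[rotated]) (simp add: g scaleR_add_right scaleR_sum_right)
  then show ?thesis unfolding cauchy_transform_def by (rule integral_unique)
qed

lemma cauchy_transform_diff:
  fixes f g :: "real \<Rightarrow> 'v::banach"
  assumes "p \<notin> {a..b}" "continuous_on {a..b} f" "continuous_on {a..b} g"
  shows "cauchy_transform a b (\<lambda>q. f q - g q) p = cauchy_transform a b f p - cauchy_transform a b g p"
proof -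
  have "\<forall>q\<in>{a..b}. q - p \<noteq> 0" using assms(1) by auto
  then have "(\<lambda>q. (1 / (q - p)) *\<^sub>R h q) integrable_on {a..b}" if "continuous_on {a..b} h" for h :: "real \<Rightarrow> 'v"
    by (intro integrable_continuous_interval continuous_intros that) auto
  then show ?thesis
    unfolding cauchy_transform_def scaleR_diff_right using assms by (intro integral_diff) auto
qed

lemma convex_open_neighbourhood_outside_interval:
  fixes p :: real
  assumes "p \<notin> {a..b}"
  obtains U where "open U" "convex U" "p \<in> U" "U \<inter> {a..b} = {}"
proof
  let ?U = "if p < a then {..<a} else {b<..}"
  show "open ?U" "convex ?U" by auto
  show "p \<in> ?U" "?U \<inter> {a..b} = {}" using assms by auto
qed

lemma has_vector_derivative_cauchy_transform:
  fixes g :: "real \<Rightarrow> 'v::banach"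
  assumes p: "p \<notin> {a..b}" and g: "continuous_on {a..b} g"
  shows "(cauchy_transform a b g has_vector_derivative integral {a..b} (\<lambda>q. (1 / (q - p)^2) *\<^sub>R g q)) (at p)"
proof -
  obtain U where U: "open U" "convex U" "p \<in> U" "U \<inter> {a..b} = {}"
    using convex_open_neighbourhood_outside_interval[OF p] by blast
  have no_pole: "q - x \<noteq> 0" if "x \<in> U" "q \<in> {a..b}" for x q
    using U(4) that by auto
  have "((\<lambda>x. integral (cbox a b) (\<lambda>q. (1 / (q - x)) *\<^sub>R g q)) has_vector_derivative
           integral (cbox a b) (\<lambda>q. (1 / (q - p)^2) *\<^sub>R g q)) (at p within U)"
  proof (rule leibniz_rule_vector_derivative)
    fix x q assume "x \<in> U" "q \<in> cbox a b"
    then have "q - x \<noteq> 0" using no_pole by auto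
    then have "((\<lambda>x. 1 / (q - x)) has_real_derivative 1 / (q - x)^2) (at x within U)"
      by (auto intro!: derivative_eq_intros simp: power2_eq_square)
    from has_vector_derivative_scaleR[OF this has_vector_derivative_const[of "g q"]]
    show "((\<lambda>x. (1 / (q - x)) *\<^sub>R g q) has_vector_derivative (1 / (q - x)^2) *\<^sub>R g q) (at x within U)"
      by simp
  next
    fix x assume "x \<in> U"
    then have "continuous_on {a..b} (\<lambda>q. (1 / (q - x)) *\<^sub>R g q)"
      using no_pole by (intro continuous_intros g) auto
    then show "(\<lambda>q. (1 / (q - x)) *\<^sub>R g q) integrable_on cbox a b"
      by (simp add: integrable_continuous_interval)
  next
    have "continuous_on (U \<times> {a..b}) (\<lambda>z. g (snd z))"
      by (rule continuous_on_compose2[OF g continuous_on_snd]) auto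
    then have "continuous_on (U \<times> {a..b}) (\<lambda>z. (1 / (snd z - fst z)^2) *\<^sub>R g (snd z))"
      using no_pole by (intro continuous_intros) auto
    then show "continuous_on (U \<times> cbox a b) (\<lambda>(x, q). (1 / (q - x)^2) *\<^sub>R g q)"
      by (simp add: case_prod_beta)
  qed (use U in auto)
  then show ?thesis
    unfolding cauchy_transform_def cbox_interval at_within_open[OF U(3) U(1)] .
qed

lemma vector_derivative_eq_cauchy_transform:
  fixes g :: "real \<Rightarrow> 'v::banach"
  assumes "\<And>p. p \<notin> {a..b} \<Longrightarrow> Y p = cauchy_transform a b g p"
    and "p \<notin> {a..b}" and "continuous_on {a..b} g"
  shows "vector_derivative Y (at p) = integral {a..b} (\<lambda>q. (1 / (q - p)^2) *\<^sub>R g q)"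
proof (rule vector_derivative_at)
  show "(Y has_vector_derivative integral {a..b} (\<lambda>q. (1 / (q - p)^2) *\<^sub>R g q)) (at p)"
    by (rule has_vector_derivative_transform_within_open
        [OF has_vector_derivative_cauchy_transform[OF assms(2,3)] open_Compl[OF closed_atLeastAtMost]])
      (use assms in auto)
qed

lemma integral_inner_constant:
  fixes f :: "real \<Rightarrow> 'v::euclidean_space"
  shows "f integrable_on S \<Longrightarrow> integral S (\<lambda>x. f x \<bullet> w) = integral S f \<bullet> w"
  using integral_linear[OF _ bounded_linear_inner_left[of w], of f S] by (simp add: o_def)

lemma integral_inner_eq_0_at_local_min:
  fixes F F' :: "real \<Rightarrow> real \<Rightarrow> 'v::euclidean_space"
  assumes U: "open U" "convex U" "x0 \<in> U"
    and min: "\<And>x. x \<in> U \<Longrightarrow>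
      integral {a..b} (\<lambda>q. norm (F x0 q)^2) \<le> integral {a..b} (\<lambda>q. norm (F x q)^2)"
    and F': "\<And>x q. x \<in> U \<Longrightarrow> q \<in> {a..b} \<Longrightarrow> ((\<lambda>x. F x q) has_vector_derivative F' x q) (at x)"
    and cont: "continuous_on (U \<times> {a..b}) (\<lambda>(x, q). F x q)"
    and cont': "continuous_on (U \<times> {a..b}) (\<lambda>(x, q). F' x q)"
  shows "integral {a..b} (\<lambda>q. F x0 q \<bullet> F' x0 q) = 0"
proof -
  define \<phi> where "\<phi> x = integral (cbox a b) (\<lambda>q. F x q \<bullet> F x q)" for x
  have "(\<phi> has_field_derivative integral (cbox a b) (\<lambda>q. 2 * (F x0 q \<bullet> F' x0 q))) (at x0 within U)"
    unfolding \<phi>_def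
  proof (rule leibniz_rule_field_derivative)
    fix x q assume "x \<in> U" "q \<in> cbox a b"
    then have "((\<lambda>x. F x q) has_derivative (\<lambda>t. t *\<^sub>R F' x q)) (at x)"
      using F' unfolding cbox_interval has_vector_derivative_def by blast
    from has_derivative_inner[OF this this]
    have "((\<lambda>x. F x q \<bullet> F x q) has_derivative (*) (2 * (F x q \<bullet> F' x q))) (at x)"
      by (rule has_derivative_eq_rhs) (auto simp: fun_eq_iff inner_commute algebra_simps)
    then show "((\<lambda>x. F x q \<bullet> F x q) has_field_derivative 2 * (F x q \<bullet> F' x q)) (at x within U)"
      by (simp add: has_field_derivative_def has_derivative_at_withinI)
  next
    fix x assume "x \<in> U"
    have "continuous_on {a..b} (F x)"
      by (rule continuous_on_compose2[OF cont, where f="\<lambda>q. (x, q)", simplified])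
        (auto intro!: continuous_intros \<open>x \<in> U\<close>)
    then show "(\<lambda>q. F x q \<bullet> F x q) integrable_on cbox a b"
      by (auto intro!: integrable_continuous_interval continuous_intros)
  next
    have "continuous_on (U \<times> cbox a b) (\<lambda>z. 2 * ((\<lambda>(x, q). F x q) z \<bullet> (\<lambda>(x, q). F' x q) z))"
      using cont cont' by (auto intro!: continuous_intros)
    then show "continuous_on (U \<times> cbox a b) (\<lambda>(x, q). 2 * (F x q \<bullet> F' x q))"
      by (simp add: case_prod_beta)
  qed (use U in auto)
  then have "(\<phi> has_field_derivative integral {a..b} (\<lambda>q. 2 * (F x0 q \<bullet> F' x0 q))) (at x0)"
    unfolding cbox_interval using at_within_open[OF U(3,1)] by simp
  moreover obtain e where "e > 0" "ball x0 e \<subseteq> U"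
    using U openE by blast
  moreover have "\<phi> x0 \<le> \<phi> y" if "\<bar>x0 - y\<bar> < e" for y
  proof -
    have "y \<in> U" using that \<open>ball x0 e \<subseteq> U\<close> by (auto simp: dist_real_def)
    then show ?thesis using min[of y] by (simp add: \<phi>_def power2_norm_eq_inner)
  qed
  ultimately have "integral {a..b} (\<lambda>q. 2 * (F x0 q \<bullet> F' x0 q)) = 0"
    by (intro DERIV_local_min) auto
  then show ?thesis by simp
qed

lemma integral_inner_eq_0_if_min_on_line:
  fixes e G :: "real \<Rightarrow> 'v::euclidean_space"
  assumes e: "continuous_on {a..b} e" and G: "continuous_on {a..b} G"
    and min: "\<And>x. integral {a..b} (\<lambda>q. norm (e q)^2) \<le> integral {a..b} (\<lambda>q. norm (e q - x *\<^sub>R G q)^2)"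
  shows "integral {a..b} (\<lambda>q. e q \<bullet> G q) = 0"
proof -
  have "integral {a..b} (\<lambda>q. (e q - 0 *\<^sub>R G q) \<bullet> - G q) = 0"
  proof (rule integral_inner_eq_0_at_local_min[where U = UNIV])
    fix x q
    show "((\<lambda>x. e q - x *\<^sub>R G q) has_vector_derivative - G q) (at x)"
      by (auto intro!: derivative_eq_intros)
  next
    have e': "continuous_on (UNIV \<times> {a..b}) (\<lambda>z. e (snd z))"
      by (rule continuous_on_compose2[OF e continuous_on_snd]) auto
    have G': "continuous_on (UNIV \<times> {a..b}) (\<lambda>z. G (snd z))"
      by (rule continuous_on_compose2[OF G continuous_on_snd]) auto
    show "continuous_on (UNIV \<times> {a..b}) (\<lambda>(x, q). e q - x *\<^sub>R G q)"
      and "continuous_on (UNIV \<times> {a..b}) (\<lambda>(x, q). - G q)"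
      unfolding case_prod_beta by (intro continuous_intros e' G')+
  qed (use min in auto)
  then show ?thesis by simp
qed

locale L2_minimal_pole_residue_sum =
  fixes a b :: real and y :: "real \<Rightarrow> real^'ni^'no"
    and c :: "'r::finite \<Rightarrow> real^'no" and bv :: "'r \<Rightarrow> real^'ni" and lam :: "'r \<Rightarrow> real"
  assumes continuous_y: "continuous_on {a..b} y"
    and poles_outside: "\<And>j. lam j \<notin> {a..b}"
    and minimal: "\<And>(c' :: 'r \<Rightarrow> real^'no) bv' lam'. \<forall>j. lam' j \<notin> {a..b} \<Longrightarrow>
      L2_err a b y (pole_residue_sum c bv lam) \<le> L2_err a b y (pole_residue_sum c' bv' lam')"
begin

definition err :: "real \<Rightarrow> real^'ni^'no" where
  "err q = y q - pole_residue_sum c bv lam q"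

lemma continuous_err: "continuous_on {a..b} err"
  unfolding err_def[abs_def]
  by (intro continuous_intros continuous_y continuous_on_pole_residue_sum poles_outside)

lemma err_minimal:
  fixes c' :: "'r \<Rightarrow> real^'no" and bv' :: "'r \<Rightarrow> real^'ni" and lam' :: "'r \<Rightarrow> real"
  assumes "\<forall>j. lam' j \<notin> {a..b}"
  shows "integral {a..b} (\<lambda>q. norm (err q)^2)
    \<le> integral {a..b} (\<lambda>q. norm (err q - (pole_residue_sum c' bv' lam' q - pole_residue_sum c bv lam q))^2)"
  using minimal[OF assms] by (simp add: L2_err_def frob_norm_eq_norm err_def)

lemma diff_lam_nonzero: "q \<in> {a..b} \<Longrightarrow> q - lam k \<noteq> 0"
  using poles_outside[of k] by auto

lemma inner_cauchy_transform_err_eq_0: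
  assumes perturbation: "\<And>x. \<exists>c' bv'. \<forall>q.
      pole_residue_sum c' bv' lam q - pole_residue_sum c bv lam q = x *\<^sub>R ((1 / (q - lam k)) *\<^sub>R M)"
  shows "cauchy_transform a b err (lam k) \<bullet> M = 0"
proof -
  define G where "G q = (1 / (q - lam k)) *\<^sub>R M" for q
  have G: "continuous_on {a..b} G"
    unfolding G_def using diff_lam_nonzero by (intro continuous_intros) auto
  have "integral {a..b} (\<lambda>q. err q \<bullet> G q) = 0"
  proof (rule integral_inner_eq_0_if_min_on_line[OF continuous_err G])
    fix x
    obtain c' bv' where "\<And>q. pole_residue_sum c' bv' lam q - pole_residue_sum c bv lam q = x *\<^sub>R G q"
      using perturbation[of x] unfolding G_def by blast
    then show "integral {a..b} (\<lambda>q. norm (err q)^2) \<le> integral {a..b} (\<lambda>q. norm (err q - x *\<^sub>R G q)^2)"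
      using err_minimal[of lam c' bv'] poles_outside by simp
  qed
  moreover have "(\<lambda>q. (1 / (q - lam k)) *\<^sub>R err q) integrable_on {a..b}"
    using diff_lam_nonzero by (intro integrable_continuous_interval continuous_intros continuous_err) auto
  ultimately show ?thesis
    by (simp add: G_def cauchy_transform_def integral_inner_constant[symmetric])
qed

lemma cauchy_transform_err_mult_bv: "cauchy_transform a b err (lam k) *v bv k = 0"
proof -
  define u where "u = cauchy_transform a b err (lam k) *v bv k"
  have "cauchy_transform a b err (lam k) \<bullet> outer u (bv k) = 0"
    by (rule inner_cauchy_transform_err_eq_0) (use pole_residue_sum_update_c in blast)
  then show ?thesis
    by (simp add: inner_outer_eq_inner_mult_vec u_def)
qed

lemma c_mult_cauchy_transform_err: "c k v* cauchy_transform a b err (lam k) = 0"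
proof -
  define v where "v = c k v* cauchy_transform a b err (lam k)"
  have "cauchy_transform a b err (lam k) \<bullet> outer (c k) v = 0"
    by (rule inner_cauchy_transform_err_eq_0) (use pole_residue_sum_update_bv in blast)
  then show ?thesis
    by (simp add: inner_outer_eq_vec_mult_inner v_def)
qed

lemma integral_inner_err_pole_derivative_eq_0:
  "integral {a..b} (\<lambda>q. err q \<bullet> ((1 / (q - lam k)^2) *\<^sub>R outer (c k) (bv k))) = 0"
proof -
  define M where "M = outer (c k) (bv k)"
  obtain U where U: "open U" "convex U" "lam k \<in> U" "U \<inter> {a..b} = {}"
    using convex_open_neighbourhood_outside_interval poles_outside by blast
  have U_no_pole: "q - s \<noteq> 0" if "s \<in> U" "q \<in> {a..b}" for s q
    using U(4) that by auto
  have "integral {a..b} (\<lambda>q. (err q - (1 / (q - lam k) - 1 / (q - lam k)) *\<^sub>R M)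
      \<bullet> - ((1 / (q - lam k)^2) *\<^sub>R M)) = 0"
  proof (rule integral_inner_eq_0_at_local_min[OF U(1-3),
        where F = "\<lambda>s q. err q - (1 / (q - s) - 1 / (q - lam k)) *\<^sub>R M"
          and F' = "\<lambda>s q. - ((1 / (q - s)^2) *\<^sub>R M)"])
    fix s assume "s \<in> U"
    then have "\<forall>j. (lam(k := s)) j \<notin> {a..b}"
      using U(4) poles_outside by auto
    from err_minimal[OF this, of c bv]
    show "integral {a..b} (\<lambda>q. norm (err q - (1 / (q - lam k) - 1 / (q - lam k)) *\<^sub>R M)^2)
      \<le> integral {a..b} (\<lambda>q. norm (err q - (1 / (q - s) - 1 / (q - lam k)) *\<^sub>R M)^2)"
      by (simp add: pole_residue_sum_update_lam M_def del: fun_upd_apply)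
  next
    fix s q assume "s \<in> U" "q \<in> {a..b}"
    then have "((\<lambda>s. 1 / (q - s) - 1 / (q - lam k)) has_real_derivative 1 / (q - s)^2) (at s)"
      using U_no_pole by (auto intro!: derivative_eq_intros simp: power2_eq_square)
    then have "((\<lambda>s. err q - (1 / (q - s) - 1 / (q - lam k)) *\<^sub>R M) has_vector_derivative
            0 - ((1 / (q - s) - 1 / (q - lam k)) *\<^sub>R 0 + (1 / (q - s)^2) *\<^sub>R M)) (at s)"
      by (intro has_vector_derivative_diff has_vector_derivative_const has_vector_derivative_scaleR)
    then show "((\<lambda>s. err q - (1 / (q - s) - 1 / (q - lam k)) *\<^sub>R M) has_vector_derivative
            - ((1 / (q - s)^2) *\<^sub>R M)) (at s)"
      by simp
  next
    have "continuous_on (U \<times> {a..b}) (\<lambda>z. err (snd z))"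
      by (rule continuous_on_compose2[OF continuous_err continuous_on_snd]) auto
    moreover have "\<forall>z\<in>U \<times> {a..b}. snd z - fst z \<noteq> 0" "\<forall>z\<in>U \<times> {a..b}. snd z - lam k \<noteq> 0"
      using U_no_pole diff_lam_nonzero by auto
    ultimately show "continuous_on (U \<times> {a..b}) (\<lambda>(s, q). err q - (1 / (q - s) - 1 / (q - lam k)) *\<^sub>R M)"
      and "continuous_on (U \<times> {a..b}) (\<lambda>(s, q). - ((1 / (q - s)^2) *\<^sub>R M))"
      unfolding case_prod_beta by (auto intro!: continuous_intros)
  qed
  then show ?thesis by (simp add: M_def)
qed

lemma c_inner_deriv_cauchy_transform_err_mult_bv:
  "c k \<bullet> (integral {a..b} (\<lambda>q. (1 / (q - lam k)^2) *\<^sub>R err q) *v bv k) = 0"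
proof -
  have "(\<lambda>q. (1 / (q - lam k)^2) *\<^sub>R err q) integrable_on {a..b}"
    using diff_lam_nonzero by (intro integrable_continuous_interval continuous_intros continuous_err) auto
  then have "integral {a..b} (\<lambda>q. (1 / (q - lam k)^2) *\<^sub>R err q) \<bullet> outer (c k) (bv k) = 0"
    using integral_inner_err_pole_derivative_eq_0[of k] by (simp add: integral_inner_constant[symmetric])
  then show ?thesis
    by (simp add: inner_outer_eq_inner_mult_vec)
qed

lemma interpolation_conditions:
  fixes Y Yh :: "real \<Rightarrow> real^'ni^'no"
  assumes Y: "\<And>p. p \<notin> {a..b} \<Longrightarrow> Y p = cauchy_transform a b y p"
    and Yh: "\<And>p. p \<notin> {a..b} \<Longrightarrow> Yh p = cauchy_transform a b (pole_residue_sum c bv lam) p"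
  shows "Y (lam k) *v bv k = Yh (lam k) *v bv k
      \<and> c k v* Y (lam k) = c k v* Yh (lam k)
      \<and> c k \<bullet> (vector_derivative Y (at (lam k)) *v bv k)
        = c k \<bullet> (vector_derivative Yh (at (lam k)) *v bv k)"
proof -
  have lam_k: "lam k \<notin> {a..b}"
    by (rule poles_outside)
  have continuous_yh: "continuous_on {a..b} (pole_residue_sum c bv lam)"
    by (rule continuous_on_pole_residue_sum) (rule poles_outside)
  have "Y (lam k) - Yh (lam k) = cauchy_transform a b err (lam k)"
    unfolding Y[OF lam_k] Yh[OF lam_k] err_def[abs_def]
    by (rule cauchy_transform_diff[symmetric, OF lam_k continuous_y continuous_yh])
  moreover have "vector_derivative Y (at (lam k)) = integral {a..b} (\<lambda>q. (1 / (q - lam k)^2) *\<^sub>R y q)"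
    and "vector_derivative Yh (at (lam k))
      = integral {a..b} (\<lambda>q. (1 / (q - lam k)^2) *\<^sub>R pole_residue_sum c bv lam q)"
    by (rule vector_derivative_eq_cauchy_transform, (use Y Yh lam_k continuous_y continuous_yh in auto)[3])+
  moreover have "integral {a..b} (\<lambda>q. (1 / (q - lam k)^2) *\<^sub>R y q)
      - integral {a..b} (\<lambda>q. (1 / (q - lam k)^2) *\<^sub>R pole_residue_sum c bv lam q)
      = integral {a..b} (\<lambda>q. (1 / (q - lam k)^2) *\<^sub>R err q)"
    unfolding err_def scaleR_diff_right
    using diff_lam_nonzero by (intro integral_diff[symmetric] integrable_continuous_interval
        continuous_intros continuous_y continuous_yh) auto
  ultimately have "(Y (lam k) - Yh (lam k)) *v bv k = 0"
    and "c k v* (Y (lam k) - Yh (lam k)) = 0"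
    and "c k \<bullet> ((vector_derivative Y (at (lam k)) - vector_derivative Yh (at (lam k))) *v bv k) = 0"
    using cauchy_transform_err_mult_bv c_mult_cauchy_transform_err
      c_inner_deriv_cauchy_transform_err_mult_bv by simp_all
  then show ?thesis
    by (simp add: matrix_vector_mult_diff_rdistrib vector_matrix_mult_diff_rdistrib inner_diff_right)
qed

end

lemma L2_optimal_imp_L2_minimal_pole_residue_sum:
  fixes Ah1 Ah2 :: "real^'r^'r" and c :: "'r \<Rightarrow> real^'no" and bv :: "'r \<Rightarrow> real^'ni"
  assumes opt: "L2_optimal a b y Ah1 Ah2 Bh Ch"
    and reduced: "\<And>q. q \<in> {a..b} \<Longrightarrow> pout Ah1 Ah2 Bh Ch q = pole_residue_sum c bv lam q"
    and poles_outside: "\<And>j. lam j \<notin> {a..b}"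
    and continuous_y: "continuous_on {a..b} y"
  shows "L2_minimal_pole_residue_sum a b y c bv lam"
proof
  fix c' :: "'r \<Rightarrow> real^'no" and bv' :: "'r \<Rightarrow> real^'ni" and lam' :: "'r \<Rightarrow> real"
  assume poles'_outside: "\<forall>j. lam' j \<notin> {a..b}"
  let ?A1 = "diag_mat (\<lambda>j. - lam' j)" and ?B = "\<chi> j. bv' j" and ?C = "transpose (\<chi> j. c' j)"
  have no_pole: "\<And>j. lam' j \<noteq> q" if "q \<in> {a..b}" for q
    using poles'_outside that by blast
  then have "\<forall>q\<in>{a..b}. invertible (?A1 + q *\<^sub>R mat 1)"
    using pout_diagonal_realization(1) by blast
  then have "L2_err a b y (pout Ah1 Ah2 Bh Ch) \<le> L2_err a b y (pout ?A1 (mat 1) ?B ?C)"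
    using opt unfolding L2_optimal_def by blast
  moreover have "L2_err a b y (pout Ah1 Ah2 Bh Ch) = L2_err a b y (pole_residue_sum c bv lam)"
    by (rule L2_err_cong) (rule reduced)
  moreover have "L2_err a b y (pout ?A1 (mat 1) ?B ?C) = L2_err a b y (pole_residue_sum c' bv' lam')"
    by (rule L2_err_cong) (use no_pole pout_diagonal_realization(2) in blast)
  ultimately show "L2_err a b y (pole_residue_sum c bv lam) \<le> L2_err a b y (pole_residue_sum c' bv' lam')"
    by simp
qed (use poles_outside continuous_y in auto)

theorem theorem5p1:
  fixes a b :: real
    and A1 A2 :: "real^'n^'n" and B :: "real^'ni^'n" and C :: "real^'n^'no"
    and Phi0 :: "real^'ni^'no" and Phi :: "'n \<Rightarrow> real^'ni^'no" and nu :: "'n \<Rightarrow> real"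
    and Ah1 Ah2 :: "real^'r^'r" and Bh :: "real^'ni^'r" and Ch :: "real^'r^'no"
    and c :: "'r \<Rightarrow> real^'no" and bv :: "'r \<Rightarrow> real^'ni" and lam :: "'r \<Rightarrow> real"
    and Y Yh :: "real \<Rightarrow> real^'ni^'no"
  assumes ab: "a < b"
    and full_inv: "\<forall>p\<in>{a..b}. invertible (A1 + p *\<^sub>R A2)"
    and full_pr: "\<forall>p\<in>{a..b}. pout A1 A2 B C p = Phi0 + (\<Sum>i\<in>UNIV. (1 / (p - nu i)) *\<^sub>R Phi i)"
    and nu_dist: "inj nu" and nu_out: "\<forall>i. nu i \<notin> {a..b}"
    and red_pr: "\<forall>p\<in>{a..b}. pout Ah1 Ah2 Bh Ch p = (\<Sum>j\<in>UNIV. (1 / (p - lam j)) *\<^sub>R outer (c j) (bv j))"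
    and lam_dist: "inj lam" and lam_out: "\<forall>j. lam j \<notin> {a..b}"
    and Y_def: "\<forall>p. p \<noteq> a \<and> p \<noteq> b \<longrightarrow>
        Y p = ln \<bar>(p - b) / (p - a)\<bar> *\<^sub>R Phi0 + (\<Sum>i\<in>UNIV. fsig a b (nu i) p *\<^sub>R Phi i)"
    and Yh_def: "\<forall>p. p \<noteq> a \<and> p \<noteq> b \<longrightarrow>
        Yh p = (\<Sum>j\<in>UNIV. fsig a b (lam j) p *\<^sub>R outer (c j) (bv j))"
    and opt: "L2_optimal a b (pout A1 A2 B C) Ah1 Ah2 Bh Ch"
  shows "\<forall>k. Y (lam k) *v bv k = Yh (lam k) *v bv k
           \<and> c k v* Y (lam k) = c k v* Yh (lam k)
           \<and> c k \<bullet> (vector_derivative Y (at (lam k)) *v bv k)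
             = c k \<bullet> (vector_derivative Yh (at (lam k)) *v bv k)"
proof
  fix k
  define y where "y = pout A1 A2 B C"
  have y_on: "y q = Phi0 + (\<Sum>i\<in>UNIV. (1 / (q - nu i)) *\<^sub>R Phi i)" if "q \<in> {a..b}" for q
    using full_pr that by (simp add: y_def)
  have yh_eq: "pole_residue_sum c bv lam q = 0 + (\<Sum>j\<in>UNIV. (1 / (q - lam j)) *\<^sub>R outer (c j) (bv j))" for q
    by (simp add: pole_residue_sum_def)
  have continuous_y: "continuous_on {a..b} y"
    by (rule continuous_on_eq[OF continuous_on_partial_fractions]) (use nu_out y_on in auto)
  interpret L2_minimal_pole_residue_sum a b y c bv lam
    by (rule L2_optimal_imp_L2_minimal_pole_residue_sum[OF opt[folded y_def] _ _ continuous_y])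
      (use red_pr lam_out in \<open>auto simp: pole_residue_sum_def\<close>)
  have "Y p = cauchy_transform a b y p" if "p \<notin> {a..b}" for p
    using Y_def cauchy_transform_partial_fractions[OF _ that nu_out[rule_format] y_on] ab that by auto
  moreover have "Yh p = cauchy_transform a b (pole_residue_sum c bv lam) p" if "p \<notin> {a..b}" for p
    using Yh_def cauchy_transform_partial_fractions[OF _ that lam_out[rule_format] yh_eq] ab that by auto
  ultimately show "Y (lam k) *v bv k = Yh (lam k) *v bv k
      \<and> c k v* Y (lam k) = c k v* Yh (lam k)
      \<and> c k \<bullet> (vector_derivative Y (at (lam k)) *v bv k)
        = c k \<bullet> (vector_derivative Yh (at (lam k)) *v bv k)"
    by (rule interpolation_conditions)
qed

end
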